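(* Let $N>2$ and assume (H1)–(H4). For $a>0$ let $v_a$ be the solution of $(P_a)$ on $[0,R^{2-N}]$. Then $\max_{[0,R^{2-N}]}|v_a|\to\infty$ as $a\to\infty$.
   Context: Fix $N>2$, $R>0$, $0<\delta<2$. The function $f:\mathbb{R}\setminus\{0\}\to\mathbb{R}$ is odd and locally Lipschitz and satisfies: (H1) there exist $p>1$ and a function $g$ with $f(u)=|u|^{p-1}u+g(u)$ for all sufficiently large $|u|$, and $\lim_{u\to\infty}|g(u)|/|u|^{p}=0$; (H2) there exist $0<q<1$ and a locally Lipschitz $g_1:\mathbb{R}\to\mathbb{R}$ with $g_1(0)=0$ such that $f(u)=-\frac{1}{|u|^{q-1}u}+g_1(u)$ for all sufficiently small $|u|\neq 0$; (H3) $f$ has a unique positive zero $\beta$, with $f<0$ on $(0,\beta)$ and $f>0$ on $(\beta,\infty)$. $K:[R,\infty)\to(0,\infty)$ with $K$ and $K'$ continuous, and (H4) $\frac{rK'(r)}{K(r)}>-2(N-1)$ on $[R,\infty)$, and there exist $K_0,K_1>0$ and exponents with $N+q(N-2)<\alpha_1\leq\alpha<2(N-1)$ such that $K_0r^{-\alpha}\leq K(r)\leq K_1r^{-\alpha_1}$ on $[R,\infty)$. Define $h(t)=\frac{t^{\frac{2(N-1)}{2-N}}K(t^{\frac{1}{2-N}})}{(N-2)^2}$ for $0<t\le R^{2-N}$. The initial value problem $(P_a)$ is $$v''(t)+h(t)f(v(t))+\frac{v(t)}{t^{2-\delta}}=0\ (t>0),\qquad v(0)=0,\ v'(0)=a,$$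 understood in the integrated sense: $v\in C^1[0,R^{2-N}]$, $v(0)=0$, $h f(v)$ integrable, and $v'(t)=a-\int_0^t h(s)f(v(s))\,ds-\int_0^t s^{\delta-2}v(s)\,ds$ for all $t\in[0,R^{2-N}]$. This solution exists on all of $[0,R^{2-N}]$ and is unique. *)

theory Defs
  imports "HOL-Analysis.Analysis"
begin

definition loc_lipschitz_on :: "real set \<Rightarrow> (real \<Rightarrow> real) \<Rightarrow> bool" where
  "loc_lipschitz_on S f \<longleftrightarrow>
     (\<forall>u\<in>S. \<exists>e>0. \<exists>L. \<forall>x\<in>ball u e \<inter> S. \<forall>y\<in>ball u e \<inter> S. \<bar>f x - f y\<bar> \<le> L * \<bar>x - y\<bar>)"

definition hfun :: "nat \<Rightarrow> (real \<Rightarrow> real) \<Rightarrow> real \<Rightarrow> real" where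
  "hfun N K t = t powr (2 * (real N - 1) / (2 - real N)) * K (t powr (1 / (2 - real N)))
                / (real N - 2)\<^sup>2"

text \<open>v solves (P_a) on [0,T] in the integrated sense.\<close>
definition solves_Pa ::
  "(real \<Rightarrow> real) \<Rightarrow> (real \<Rightarrow> real) \<Rightarrow> real \<Rightarrow> real \<Rightarrow> real \<Rightarrow> (real \<Rightarrow> real) \<Rightarrow> bool" where
  "solves_Pa h f \<delta> T a v \<longleftrightarrow>
     (\<exists>v'. continuous_on {0..T} v' \<and>
        (\<forall>t\<in>{0..T}. (v has_real_derivative v' t) (at t within {0..T})) \<and>
        v 0 = 0 \<and>
        (\<lambda>s. h s * f (v s)) absolutely_integrable_on {0..T} \<and>
        (\<forall>t\<in>{0..T}. (\<lambda>s. s powr (\<delta> - 2) * v s) integrable_on {0..t} \<and>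
           v' t = a - integral {0..t} (\<lambda>s. h s * f (v s))
                    - integral {0..t} (\<lambda>s. s powr (\<delta> - 2) * v s)))"

end

theory Submission
  imports Defs
begin

(* Suppose v_a \<le> M on [0,T]. Since v_a'(0) = a, the slope stays \<ge> a/2 up to a first time
   t_s \<le> \<tau>, where \<tau>^\<delta>/\<delta> \<le> 1/4, at which either t_s = \<tau> (then v_a(\<tau>) \<ge> a\<tau>/2 > M for large a)
   or v_a'(t_s) = a/2. In the latter case v_a(s) \<ge> s/2 on [0,t_s], so the singularity -u^(-q) of f
   at 0 together with h(s) \<le> c s^(-\<gamma>), \<gamma> + q < 1, bounds h f(v_a) below by an integrable function
   independent of a. This gives v_a' \<le> a + D and v_a(s) \<le> (a + D) s on [0,t_s], while
   f(v_a) \<le> C on (0,M] bounds the integral of h f(v_a) above by some E. The integral equation at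
   t_s then reads a/2 \<ge> a - E - (a + D)/4, i.e. a \<le> 4E + D, which fails for large a. *)

lemma loc_lipschitz_on_imp_continuous_on:
  assumes "loc_lipschitz_on S f"
  shows "continuous_on S f"
  unfolding continuous_on_eq_continuous_within
proof
  fix u assume "u \<in> S"
  then obtain e L where "e > 0"
    and L: "\<forall>x\<in>ball u e \<inter> S. \<forall>y\<in>ball u e \<inter> S. \<bar>f x - f y\<bar> \<le> L * \<bar>x - y\<bar>"
    using assms unfolding loc_lipschitz_on_def by blast
  then have "(max L 0)-lipschitz_on (ball u e \<inter> S) f"
    by (force simp: lipschitz_on_def dist_real_def intro: order_trans[OF _ mult_right_mono])
  then have "continuous (at u within ball u e \<inter> S) f"
    using \<open>e > 0\<close> \<open>u \<in> S\<close> by (intro lipschitz_on_continuous_within) auto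
  moreover have "at u within S = at u within ball u e \<inter> S"
    by (rule at_within_nhd[of u "ball u e"]) (use \<open>e > 0\<close> in auto)
  ultimately show "continuous (at u within S) f"
    by simp
qed

lemma mvt_within_Icc:
  fixes f f' :: "real \<Rightarrow> real"
  assumes "a \<le> s" "s \<le> b"
    and der: "\<forall>x\<in>{a..b}. (f has_real_derivative f' x) (at x within {a..b})"
  shows "\<exists>x\<in>{a..s}. f s - f a = f' x * (s - a)"
proof -
  have "(f has_real_derivative f' x) (at x within {a..s})" if "a \<le> x" "x \<le> s" for x
    using der that assms by (auto intro: has_field_derivative_subset[of _ _ _ "{a..b}"])
  then have "(f has_derivative (\<lambda>y. f' x * y)) (at x within {a..s})" if "a \<le> x" "x \<le> s" for x
    using that by (simp add: has_field_derivative_def)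
  then show ?thesis
    using mvt_very_simple[OF \<open>a \<le> s\<close>, of f "\<lambda>x y. f' x * y"] by blast
qed

lemma linear_lower_bound_of_slope:
  fixes v v' :: "real \<Rightarrow> real"
  assumes der: "\<forall>x\<in>{0..T}. (v has_real_derivative v' x) (at x within {0..T})"
    and s: "s \<in> {0..T}" and slope: "\<forall>x\<in>{0..s}. L \<le> v' x"
  shows "v 0 + L * s \<le> v s"
proof -
  obtain x where x: "x \<in> {0..s}" "v s - v 0 = v' x * (s - 0)"
    using mvt_within_Icc[OF _ _ der, of s] s by auto
  have "L * s \<le> v' x * s"
    using slope x s by (intro mult_right_mono) auto
  then show ?thesis
    using x by simp
qed

lemma linear_upper_bound_of_slope:
  fixes v v' :: "real \<Rightarrow> real"
  assumes der: "\<forall>x\<in>{0..T}. (v has_real_derivative v' x) (at x within {0..T})"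
    and s: "s \<in> {0..T}" and slope: "\<forall>x\<in>{0..s}. v' x \<le> L"
  shows "v s \<le> v 0 + L * s"
proof -
  obtain x where x: "x \<in> {0..s}" "v s - v 0 = v' x * (s - 0)"
    using mvt_within_Icc[OF _ _ der, of s] s by auto
  have "v' x * s \<le> L * s"
    using slope x s by (intro mult_right_mono) auto
  then show ?thesis
    using x by simp
qed

lemma first_crossing:
  fixes g :: "real \<Rightarrow> real"
  assumes cont: "continuous_on {a..b} g" and "a \<le> b" "c \<le> g a"
  shows "\<exists>t\<in>{a..b}. (\<forall>s\<in>{a..t}. c \<le> g s) \<and> (t = b \<or> g t = c)"
proof -
  define S where "S = {a..b} \<inter> g -` {..c}"
  show ?thesis
  proof (cases "S = {}")
    case True
    then show ?thesis
      using \<open>a \<le> b\<close> by (intro bexI[of _ b]) (auto simp: S_def)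
  next
    case False
    have "closed S"
      unfolding S_def by (intro continuous_closed_preimage cont) auto
    moreover have "bdd_below S"
      unfolding S_def by (auto intro: bdd_belowI[of _ a])
    ultimately have "Inf S \<in> S"
      using False closed_contains_Inf by blast
    then have t: "a \<le> Inf S" "Inf S \<le> b" "g (Inf S) \<le> c"
      by (auto simp: S_def)
    have above: "c < g s" if "a \<le> s" "s < Inf S" for s
      using that t cInf_lower[OF _ \<open>bdd_below S\<close>, of s] by (force simp: S_def)
    obtain x where x: "a \<le> x" "x \<le> Inf S" "g x = c"
      using IVT2'[of g "Inf S" c a] t assms continuous_on_subset[OF cont, of "{a..Inf S}"]
      by auto
    then have "g (Inf S) = c"
      using above[of x] by force
    moreover have "c \<le> g s" if "s \<in> {a..Inf S}" for s
      using that above[of s] \<open>g (Inf S) = c\<close> by (cases "s = Inf S") auto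
    ultimately show ?thesis
      using t by (intro bexI[of _ "Inf S"]) auto
  qed
qed

lemma singular_lower_bound:
  fixes f g :: "real \<Rightarrow> real"
  assumes f_cont: "continuous_on {0<..} f" and g_cont: "continuous_on {0..\<epsilon>} g" and "0 < \<epsilon>"
    and near_0: "\<forall>u. 0 < \<bar>u\<bar> \<and> \<bar>u\<bar> < \<epsilon> \<longrightarrow> f u = - 1 / (\<bar>u\<bar> powr (q - 1) * u) + g u"
    and positive: "\<forall>u>\<beta>. 0 < f u"
  shows "\<exists>B\<ge>0. \<forall>u>0. - (u powr - q) - B \<le> f u"
proof -
  obtain u1 where u1: "\<forall>u\<in>{0..\<epsilon>}. g u1 \<le> g u"
    using continuous_attains_inf[OF compact_Icc _ g_cont] \<open>0 < \<epsilon>\<close> by auto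
  have "continuous_on {\<epsilon>..max \<beta> \<epsilon>} f"
    by (rule continuous_on_subset[OF f_cont]) (use \<open>0 < \<epsilon>\<close> in auto)
  then obtain u2 where u2: "\<forall>u\<in>{\<epsilon>..max \<beta> \<epsilon>}. f u2 \<le> f u"
    using continuous_attains_inf[OF compact_Icc, of \<epsilon> "max \<beta> \<epsilon>" f] by auto
  define B where "B = max 0 (max (- g u1) (- f u2))"
  have "- (u powr - q) - B \<le> f u" if "0 < u" for u
  proof (cases "u < \<epsilon>")
    case True
    then have "g u1 \<le> g u"
      using u1 that by simp
    then have "- B \<le> g u"
      unfolding B_def by linarith
    moreover have "u powr (q - 1) * u = u powr q"
      using \<open>0 < u\<close> by (simp add: powr_diff)
    ultimately show ?thesis
      using near_0 that True by (simp add: powr_minus_divide)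
  next
    case False
    have "- B \<le> f u"
    proof (cases "u \<le> max \<beta> \<epsilon>")
      case True
      then have "f u2 \<le> f u"
        using u2 False by simp
      then show ?thesis
        unfolding B_def by linarith
    next
      case False
      then have "0 < f u"
        using positive by simp
      then show ?thesis
        unfolding B_def by linarith
    qed
    then show ?thesis
      using powr_ge_zero[of u "- q"] by linarith
  qed
  then show ?thesis
    by (intro exI[of _ B]) (auto simp: B_def)
qed

lemma upper_bound_on_Ioc:
  fixes f :: "real \<Rightarrow> real"
  assumes f_cont: "continuous_on {0<..} f" and "0 < \<beta>"
    and negative: "\<forall>u. 0 < u \<and> u < \<beta> \<longrightarrow> f u < 0"
  shows "\<exists>C\<ge>0. \<forall>u. 0 < u \<and> u \<le> M \<longrightarrow> f u \<le> C"
proof -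
  have "continuous_on {\<beta>..max \<beta> M} f"
    by (rule continuous_on_subset[OF f_cont]) (use \<open>0 < \<beta>\<close> in auto)
  then obtain u0 where u0: "\<forall>u\<in>{\<beta>..max \<beta> M}. f u \<le> f u0"
    using continuous_attains_sup[OF compact_Icc, of \<beta> "max \<beta> M" f] by auto
  have "f u \<le> max 0 (f u0)" if "0 < u" "u \<le> M" for u
  proof (cases "u < \<beta>")
    case False
    then have "f u \<le> f u0"
      using u0 that by simp
    then show ?thesis
      by linarith
  qed (use negative that in force)
  then show ?thesis
    by (intro exI[of _ "max 0 (f u0)"]) auto
qed

lemma hfun_bounds:
  fixes N :: nat and K :: "real \<Rightarrow> real"
  assumes "N > 2" "R > 0"
    and K: "\<forall>r\<ge>R. 0 < K r" "\<forall>r\<ge>R. K r \<le> K1 * r powr - \<alpha>1"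
    and s: "s \<in> {0..R powr (2 - real N)}"
  shows "0 \<le> hfun N K s \<and>
    hfun N K s \<le> K1 / (real N - 2)\<^sup>2 * s powr - ((2 * (real N - 1) - \<alpha>1) / (real N - 2))"
proof (cases "s = 0")
  case True
  then show ?thesis
    by (simp add: hfun_def)
next
  case False
  then have "0 < s"
    using s by simp
  define r where "r = s powr (1 / (2 - real N))"
  have "R = (R powr (2 - real N)) powr (1 / (2 - real N))"
    using assms by (simp add: powr_powr)
  also have "\<dots> \<le> r"
    unfolding r_def using \<open>N > 2\<close> \<open>0 < s\<close> s by (intro powr_mono2') auto
  finally have Kr: "0 < K r" "K r \<le> K1 * s powr (- \<alpha>1 / (2 - real N))"
    using K \<open>0 < s\<close> by (auto simp: r_def powr_powr)
  have exponent: "2 * (real N - 1) / (2 - real N) + - \<alpha>1 / (2 - real N)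
      = - ((2 * (real N - 1) - \<alpha>1) / (real N - 2))"
  proof -
    have "2 * (real N - 1) / (2 - real N) + - \<alpha>1 / (2 - real N)
        = (2 * (real N - 1) - \<alpha>1) / (2 - real N)"
      by (simp add: diff_divide_distrib)
    then show ?thesis
      by (metis minus_diff_eq divide_minus_right)
  qed
  have "hfun N K s = s powr (2 * (real N - 1) / (2 - real N)) * K r / (real N - 2)\<^sup>2"
    by (simp add: hfun_def r_def)
  also have "\<dots> \<le> s powr (2 * (real N - 1) / (2 - real N)) * (K1 * s powr (- \<alpha>1 / (2 - real N)))
      / (real N - 2)\<^sup>2"
    using Kr by (intro divide_right_mono mult_left_mono) auto
  also have "\<dots> = K1 / (real N - 2)\<^sup>2
      * (s powr (2 * (real N - 1) / (2 - real N)) * s powr (- \<alpha>1 / (2 - real N)))"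
    by simp
  also have "\<dots> = K1 / (real N - 2)\<^sup>2 * s powr - ((2 * (real N - 1) - \<alpha>1) / (real N - 2))"
    unfolding powr_add[symmetric] exponent ..
  finally show ?thesis
    using Kr by (simp add: hfun_def r_def)
qed

lemma weighted_singular_lower_bound:
  fixes f :: "real \<Rightarrow> real"
  assumes "0 < s" "s / 2 \<le> u" "0 \<le> h" "h \<le> c * s powr - \<gamma>" "0 < q" "0 \<le> B"
    and f_lower: "\<forall>u>0. - (u powr - q) - B \<le> f u"
  shows "- (c * (2 powr q * s powr (- \<gamma> - q) + B * s powr - \<gamma>)) \<le> h * f u"
proof -
  have "u powr - q \<le> (s / 2) powr - q"
    using assms by (intro powr_mono2') auto
  also have "\<dots> = 2 powr q * s powr - q"
    using \<open>0 < s\<close> by (simp add: powr_divide powr_minus divide_simps)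
  finally have "u powr - q \<le> 2 powr q * s powr - q" .
  moreover have "- (u powr - q) - B \<le> f u"
    using f_lower assms by (simp add: field_simps)
  ultimately have fu: "- (2 powr q * s powr - q) - B \<le> f u"
    by linarith
  have "- (c * (2 powr q * s powr (- \<gamma> - q) + B * s powr - \<gamma>))
      = c * s powr - \<gamma> * (- (2 powr q * s powr - q) - B)"
    using powr_add[of s "- \<gamma>" "- q"] by (simp add: algebra_simps)
  also have "\<dots> \<le> h * (- (2 powr q * s powr - q) - B)"
  proof (rule mult_right_mono_neg)
    have "0 \<le> 2 powr q * s powr - q"
      by (intro mult_nonneg_nonneg) simp_all
    then show "- (2 powr q * s powr - q) - B \<le> 0"
      using \<open>0 \<le> B\<close> by linarith
  qed (use assms in simp)
  also have "\<dots> \<le> h * f u"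
    using fu assms by (intro mult_left_mono) auto
  finally show ?thesis .
qed

lemma integral_weighted_singular_lower_bound:
  fixes h f v :: "real \<Rightarrow> real"
  assumes h: "\<forall>s\<in>{0..T}. 0 \<le> h s \<and> h s \<le> c * s powr - \<gamma>" "0 \<le> c" "\<gamma> + q < 1" "0 < q"
    and f_lower: "\<forall>u>0. - (u powr - q) - B \<le> f u" "0 \<le> B"
    and hf_int: "(\<lambda>s. h s * f (v s)) integrable_on {0..T}"
    and r: "r \<in> {0..T}" and v: "\<forall>s\<in>{0..r}. s / 2 \<le> v s"
  shows "- integral {0..T} (\<lambda>s. c * (2 powr q * s powr (- \<gamma> - q) + B * s powr - \<gamma>))
    \<le> integral {0..r} (\<lambda>s. h s * f (v s))"
proof -
  define m where "m = (\<lambda>s. c * (2 powr q * s powr (- \<gamma> - q) + B * s powr - \<gamma>))"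
  have m_int: "m integrable_on {0..T}"
    unfolding m_def using h r
    by (intro integrable_on_mult_right integrable_add integrable_on_powr_from_0) auto
  have "- integral {0..T} m \<le> - integral {0..r} m"
    using m_int integrable_on_subinterval[OF m_int] r h f_lower
    by (intro le_imp_neg_le integral_subset_le) (auto simp: m_def)
  also have "\<dots> = integral {0..r} (\<lambda>s. - m s)"
    by simp
  also have "\<dots> \<le> integral {0..r} (\<lambda>s. h s * f (v s))"
  proof (rule integral_le)
    show "(\<lambda>s. - m s) integrable_on {0..r}"
      using integrable_on_subinterval[OF m_int] r by (intro integrable_neg) auto
    show "(\<lambda>s. h s * f (v s)) integrable_on {0..r}"
      using integrable_on_subinterval[OF hf_int] r by auto
    fix s assume s: "s \<in> {0..r}"
    show "- m s \<le> h s * f (v s)"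
    proof (cases "s = 0")
      case True
      have "0 \<in> {0..T}"
        using r by simp
      then have "0 \<le> h 0" "h 0 \<le> c * 0 powr - \<gamma>"
        using h by blast+
      then show ?thesis
        using True by (simp add: m_def)
    next
      case False
      then show ?thesis
        unfolding m_def using s r h f_lower v
        by (intro weighted_singular_lower_bound) auto
    qed
  qed
  finally show ?thesis
    unfolding m_def .
qed

lemma integral_weighted_upper_bound:
  fixes h f v :: "real \<Rightarrow> real"
  assumes h: "\<forall>s\<in>{0..T}. 0 \<le> h s \<and> h s \<le> c * s powr - \<gamma>" "0 \<le> c" "\<gamma> < 1"
    and hf_int: "(\<lambda>s. h s * f (v s)) integrable_on {0..T}"
    and r: "r \<in> {0..T}" and f_upper: "\<forall>s\<in>{0<..r}. f (v s) \<le> C" "0 \<le> C"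
  shows "integral {0..r} (\<lambda>s. h s * f (v s)) \<le> C * c * integral {0..T} (\<lambda>s. s powr - \<gamma>)"
proof -
  have "integral {0..r} (\<lambda>s. h s * f (v s)) \<le> integral {0..r} (\<lambda>s. C * c * s powr - \<gamma>)"
  proof (rule integral_le)
    show "(\<lambda>s. h s * f (v s)) integrable_on {0..r}"
      using integrable_on_subinterval[OF hf_int] r by auto
    show "(\<lambda>s. C * c * s powr - \<gamma>) integrable_on {0..r}"
      using h r by (intro integrable_on_mult_right integrable_on_powr_from_0) auto
    fix s assume s: "s \<in> {0..r}"
    show "h s * f (v s) \<le> C * c * s powr - \<gamma>"
    proof (cases "s = 0")
      case True
      then show ?thesis
        using h r by force
    next
      case False
      then have "h s * f (v s) \<le> h s * C"
        using s r h f_upper by (intro mult_left_mono) auto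
      also have "\<dots> \<le> c * s powr - \<gamma> * C"
        using s r h f_upper by (intro mult_right_mono) auto
      finally show ?thesis
        by (simp add: algebra_simps)
    qed
  qed
  also have "\<dots> \<le> C * c * integral {0..T} (\<lambda>s. s powr - \<gamma>)"
    using r h f_upper
    by (auto intro!: mult_left_mono integral_subset_le integrable_on_powr_from_0)
  finally show ?thesis .
qed

lemma integral_powr_times_linear_bound:
  fixes w :: "real \<Rightarrow> real"
  assumes "0 < \<delta>" "0 \<le> t"
    and w_int: "(\<lambda>s. s powr (\<delta> - 2) * w s) integrable_on {0..t}"
    and w: "\<forall>s\<in>{0..t}. w s \<le> L * s"
  shows "integral {0..t} (\<lambda>s. s powr (\<delta> - 2) * w s) \<le> L * (t powr \<delta> / \<delta>)"
proof -
  have L: "((\<lambda>s. L * s powr (\<delta> - 1)) has_integral L * (t powr \<delta> / \<delta>)) {0..t}"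
    using has_integral_powr_from_0[of "\<delta> - 1" t] assms by (intro has_integral_mult_right) auto
  have "s powr (\<delta> - 2) * w s \<le> L * s powr (\<delta> - 1)" if "s \<in> {0..t}" for s
  proof (cases "s = 0")
    case False
    then have "0 < s"
      using that by simp
    have "s powr (\<delta> - 2) * w s \<le> s powr (\<delta> - 2) * (L * s)"
      using w that by (intro mult_left_mono) auto
    also have "\<dots> = L * s powr (\<delta> - 1)"
      using \<open>0 < s\<close> powr_add[of s "\<delta> - 2" 1] by simp
    finally show ?thesis .
  qed simp
  then show ?thesis
    using integral_le[OF w_int has_integral_integrable[OF L]] integral_unique[OF L] by simp
qed

lemma slope_upper_bound:
  fixes h f v :: "real \<Rightarrow> real"
  assumes hf_int: "(\<lambda>s. h s * f (v s)) integrable_on {0..T}"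
    and eq: "\<forall>t\<in>{0..T}. (\<lambda>s. s powr (\<delta> - 2) * v s) integrable_on {0..t} \<and>
      v' t = a - integral {0..t} (\<lambda>s. h s * f (v s)) - integral {0..t} (\<lambda>s. s powr (\<delta> - 2) * v s)"
    and h: "\<forall>s\<in>{0..T}. 0 \<le> h s \<and> h s \<le> c * s powr - \<gamma>" "0 \<le> c" "\<gamma> + q < 1" "0 < q"
    and f_lower: "\<forall>u>0. - (u powr - q) - B \<le> f u" "0 \<le> B"
    and r: "r \<in> {0..T}" and v: "\<forall>s\<in>{0..r}. s / 2 \<le> v s"
  shows "v' r \<le> a + integral {0..T} (\<lambda>s. c * (2 powr q * s powr (- \<gamma> - q) + B * s powr - \<gamma>))"
proof -
  have "- integral {0..T} (\<lambda>s. c * (2 powr q * s powr (- \<gamma> - q) + B * s powr - \<gamma>))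
      \<le> integral {0..r} (\<lambda>s. h s * f (v s))"
    by (rule integral_weighted_singular_lower_bound[OF h f_lower hf_int r v])
  moreover have "0 \<le> integral {0..r} (\<lambda>s. s powr (\<delta> - 2) * v s)"
    using eq r v by (intro integral_nonneg) (auto intro!: mult_nonneg_nonneg order_trans[OF _ v[rule_format]])
  ultimately show ?thesis
    using eq r by auto
qed

lemma slope_bound_at_crossing:
  fixes h f v v' :: "real \<Rightarrow> real"
  assumes der: "\<forall>t\<in>{0..T}. (v has_real_derivative v' t) (at t within {0..T})" and "v 0 = 0"
    and hf_int: "(\<lambda>s. h s * f (v s)) integrable_on {0..T}"
    and eq: "\<forall>t\<in>{0..T}. (\<lambda>s. s powr (\<delta> - 2) * v s) integrable_on {0..t} \<and>
      v' t = a - integral {0..t} (\<lambda>s. h s * f (v s)) - integral {0..t} (\<lambda>s. s powr (\<delta> - 2) * v s)"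
    and h: "\<forall>s\<in>{0..T}. 0 \<le> h s \<and> h s \<le> c * s powr - \<gamma>" "0 \<le> c" "\<gamma> + q < 1" "0 < q"
    and f_lower: "\<forall>u>0. - (u powr - q) - B \<le> f u" "0 \<le> B"
    and f_upper: "\<forall>u. 0 < u \<and> u \<le> M \<longrightarrow> f u \<le> C" "0 \<le> C"
    and "0 < \<delta>" and ts: "ts \<in> {0..T}" "ts powr \<delta> / \<delta> \<le> 1 / 4"
    and slope: "\<forall>t\<in>{0..ts}. a / 2 \<le> v' t" "v' ts = a / 2"
    and v_le: "\<forall>t\<in>{0..ts}. v t \<le> M" and "1 \<le> a"
  shows "a \<le> 4 * (C * c * integral {0..T} (\<lambda>s. s powr - \<gamma>))
    + integral {0..T} (\<lambda>s. c * (2 powr q * s powr (- \<gamma> - q) + B * s powr - \<gamma>))"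
proof -
  define D where "D = integral {0..T} (\<lambda>s. c * (2 powr q * s powr (- \<gamma> - q) + B * s powr - \<gamma>))"
  have v_lower: "a / 2 * s \<le> v s" if "s \<in> {0..ts}" for s
    using linear_lower_bound_of_slope[OF der, of s "a / 2"] that ts slope \<open>v 0 = 0\<close> by auto
  then have "s / 2 \<le> v s" if "s \<in> {0..ts}" for s
    using that \<open>1 \<le> a\<close> mult_right_mono[of 1 a s] by force
  then have v'_upper: "v' r \<le> a + D" if "r \<in> {0..ts}" for r
    unfolding D_def using that ts by (intro slope_upper_bound[OF hf_int eq h f_lower]) auto
  then have v_upper: "v s \<le> (a + D) * s" if "s \<in> {0..ts}" for s
    using linear_upper_bound_of_slope[OF der, of s "a + D"] that ts \<open>v 0 = 0\<close> by auto
  have "f (v s) \<le> C" if s: "s \<in> {0<..ts}" for s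
  proof -
    have "0 < a / 2 * s"
      using s \<open>1 \<le> a\<close> by simp
    then show ?thesis
      using v_lower[of s] f_upper v_le s by auto
  qed
  then have "integral {0..ts} (\<lambda>s. h s * f (v s)) \<le> C * c * integral {0..T} (\<lambda>s. s powr - \<gamma>)"
    using h hf_int ts f_upper by (intro integral_weighted_upper_bound[of T h c \<gamma> f v]) auto
  moreover have "integral {0..ts} (\<lambda>s. s powr (\<delta> - 2) * v s) \<le> (a + D) / 4"
  proof -
    have "a / 2 \<le> v' 0" "v' 0 \<le> a + D"
      using v'_upper[of 0] slope(1) ts by auto
    then have "0 \<le> a + D"
      using \<open>1 \<le> a\<close> by linarith
    have "integral {0..ts} (\<lambda>s. s powr (\<delta> - 2) * v s) \<le> (a + D) * (ts powr \<delta> / \<delta>)"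
      using eq ts v_upper \<open>0 < \<delta>\<close> by (intro integral_powr_times_linear_bound) auto
    also have "\<dots> \<le> (a + D) * (1 / 4)"
      using \<open>0 \<le> a + D\<close> ts by (intro mult_left_mono) auto
    finally show ?thesis
      by simp
  qed
  ultimately show ?thesis
    using eq ts slope unfolding D_def by auto
qed

lemma solves_Pa_below_level_imp_slope_bound:
  fixes h f v :: "real \<Rightarrow> real"
  assumes sol: "solves_Pa h f \<delta> T a v" and "0 < \<delta>"
    and \<tau>: "0 < \<tau>" "\<tau> \<le> T" "\<tau> powr \<delta> / \<delta> \<le> 1 / 4"
    and h: "\<forall>s\<in>{0..T}. 0 \<le> h s \<and> h s \<le> c * s powr - \<gamma>" "0 \<le> c" "\<gamma> + q < 1" "0 < q"
    and f_lower: "\<forall>u>0. - (u powr - q) - B \<le> f u" "0 \<le> B"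
    and f_upper: "\<forall>u. 0 < u \<and> u \<le> M \<longrightarrow> f u \<le> C" "0 \<le> C"
    and v_le: "\<forall>t\<in>{0..T}. v t \<le> M" and "1 \<le> a"
  shows "a \<le> max (2 * M / \<tau>) (4 * (C * c * integral {0..T} (\<lambda>s. s powr - \<gamma>))
    + integral {0..T} (\<lambda>s. c * (2 powr q * s powr (- \<gamma> - q) + B * s powr - \<gamma>)))"
proof -
  obtain v' where v'_cont: "continuous_on {0..T} v'"
    and der: "\<forall>t\<in>{0..T}. (v has_real_derivative v' t) (at t within {0..T})"
    and "v 0 = 0" and hf_int: "(\<lambda>s. h s * f (v s)) absolutely_integrable_on {0..T}"
    and eq: "\<forall>t\<in>{0..T}. (\<lambda>s. s powr (\<delta> - 2) * v s) integrable_on {0..t} \<and>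
      v' t = a - integral {0..t} (\<lambda>s. h s * f (v s)) - integral {0..t} (\<lambda>s. s powr (\<delta> - 2) * v s)"
    using sol unfolding solves_Pa_def by blast
  have "v' 0 = a"
    using eq \<tau> by simp
  have "\<exists>ts\<in>{0..\<tau>}. (\<forall>t\<in>{0..ts}. a / 2 \<le> v' t) \<and> (ts = \<tau> \<or> v' ts = a / 2)"
  proof (rule first_crossing)
    show "continuous_on {0..\<tau>} v'"
      using continuous_on_subset[OF v'_cont] \<tau> by auto
  qed (use \<open>v' 0 = a\<close> \<tau> \<open>1 \<le> a\<close> in auto)
  then obtain ts where ts: "ts \<in> {0..\<tau>}" "\<forall>t\<in>{0..ts}. a / 2 \<le> v' t" "ts = \<tau> \<or> v' ts = a / 2"
    by blast
  show ?thesis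
  proof (cases "ts = \<tau>")
    case True
    have "a / 2 * \<tau> \<le> v \<tau>"
      using linear_lower_bound_of_slope[OF der, of \<tau> "a / 2"] ts True \<tau> \<open>v 0 = 0\<close> by auto
    also have "\<dots> \<le> M"
      using v_le \<tau> by simp
    finally have "a \<le> 2 * M / \<tau>"
      using \<tau> by (simp add: field_simps)
    then show ?thesis
      by simp
  next
    case False
    have "ts powr \<delta> / \<delta> \<le> \<tau> powr \<delta> / \<delta>"
      using ts \<open>0 < \<delta>\<close> by (intro divide_right_mono powr_mono2) auto
    then have "ts powr \<delta> / \<delta> \<le> 1 / 4"
      using \<tau>(3) by linarith
    moreover have "(\<lambda>s. h s * f (v s)) integrable_on {0..T}"
      using hf_int by (simp add: absolutely_integrable_on_def)
    ultimately show ?thesis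
      using ts False \<tau> v_le \<open>1 \<le> a\<close>
      by (intro max.coboundedI2 slope_bound_at_crossing[OF der \<open>v 0 = 0\<close> _ eq h f_lower f_upper
        \<open>0 < \<delta>\<close>, where ts = ts]) auto
  qed
qed

lemma solves_Pa_exceeds_level:
  fixes h f :: "real \<Rightarrow> real"
  assumes "0 < T" "0 < \<delta>"
    and h: "\<forall>s\<in>{0..T}. 0 \<le> h s \<and> h s \<le> c * s powr - \<gamma>" "0 \<le> c" "\<gamma> + q < 1" "0 < q"
    and f_lower: "\<forall>u>0. - (u powr - q) - B \<le> f u" "0 \<le> B"
    and f_upper: "\<forall>u. 0 < u \<and> u \<le> M \<longrightarrow> f u \<le> C" "0 \<le> C"
  shows "\<forall>\<^sub>F a in at_top. \<forall>v. solves_Pa h f \<delta> T a v \<longrightarrow> (\<exists>t\<in>{0..T}. M < v t)"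
proof -
  define \<tau> where "\<tau> = min T ((\<delta> / 4) powr (1 / \<delta>))"
  have \<tau>: "0 < \<tau>" "\<tau> \<le> T"
    using assms by (auto simp: \<tau>_def)
  have "\<tau> powr \<delta> \<le> ((\<delta> / 4) powr (1 / \<delta>)) powr \<delta>"
    using \<tau> \<open>0 < \<delta>\<close> by (intro powr_mono2) (auto simp: \<tau>_def)
  then have "\<tau> powr \<delta> / \<delta> \<le> 1 / 4"
    using \<open>0 < \<delta>\<close> by (simp add: powr_powr divide_simps)
  note slope_bound = solves_Pa_below_level_imp_slope_bound[OF _ \<open>0 < \<delta>\<close> \<tau> this h f_lower f_upper]
  show ?thesis
    using eventually_gt_at_top[of "max 1 (max (2 * M / \<tau>) (4 * (C * c * integral {0..T}
      (\<lambda>s. s powr - \<gamma>)) + integral {0..T} (\<lambda>s. c * (2 powr q * s powr (- \<gamma> - q) + B * s powr - \<gamma>))))"]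
    by eventually_elim (force dest: slope_bound)
qed

lemma solves_Pa_continuous_on:
  assumes "solves_Pa h f \<delta> T a v"
  shows "continuous_on {0..T} v"
  using assms unfolding solves_Pa_def by (auto intro: DERIV_continuous_on)

lemma filterlim_SUP_abs_at_top:
  fixes v :: "'a \<Rightarrow> real \<Rightarrow> real"
  assumes cont: "\<forall>\<^sub>F a in F. continuous_on {b..c} (v a)"
    and exceeds: "\<And>Z. \<forall>\<^sub>F a in F. \<exists>t\<in>{b..c}. Z < v a t"
  shows "filterlim (\<lambda>a. SUP t\<in>{b..c}. \<bar>v a t\<bar>) at_top F"
  unfolding filterlim_at_top
proof
  fix Z
  show "\<forall>\<^sub>F a in F. Z \<le> (SUP t\<in>{b..c}. \<bar>v a t\<bar>)"
    using cont exceeds[of Z]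
  proof eventually_elim
    case (elim a)
    then obtain t where t: "t \<in> {b..c}" "Z < v a t"
      by blast
    have "bdd_above ((\<lambda>t. \<bar>v a t\<bar>) ` {b..c})"
      using elim by (intro bounded_imp_bdd_above compact_imp_bounded compact_continuous_image
        continuous_intros) auto
    then have "\<bar>v a t\<bar> \<le> (SUP t\<in>{b..c}. \<bar>v a t\<bar>)"
      by (rule cSUP_upper[OF t(1)])
    then show ?case
      using t by linarith
  qed
qed

theorem lemma2p5:
  fixes N :: nat and R \<delta> p q \<alpha> \<alpha>1 K0 K1 :: real
    and f K K' :: "real \<Rightarrow> real"
    and v :: "real \<Rightarrow> real \<Rightarrow> real"
  assumes N: "N > 2" and R: "R > 0" and \<delta>: "0 < \<delta>" "\<delta> < 2"
    and f_odd: "\<forall>u. f (- u) = - f u"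
    and f_lip: "loc_lipschitz_on (- {0}) f"
    and H1: "p > 1" "\<exists>g M. (\<forall>u. \<bar>u\<bar> \<ge> M \<longrightarrow> f u = \<bar>u\<bar> powr (p - 1) * u + g u)
                 \<and> ((\<lambda>u. \<bar>g u\<bar> / \<bar>u\<bar> powr p) \<longlongrightarrow> 0) at_top"
    and H2: "0 < q" "q < 1" "\<exists>g1 \<epsilon>. loc_lipschitz_on UNIV g1 \<and> g1 0 = 0 \<and> \<epsilon> > 0 \<and>
                 (\<forall>u. 0 < \<bar>u\<bar> \<and> \<bar>u\<bar> < \<epsilon> \<longrightarrow> f u = - 1 / (\<bar>u\<bar> powr (q - 1) * u) + g1 u)"
    and H3: "\<exists>\<beta>>0. f \<beta> = 0 \<and> (\<forall>u>0. f u = 0 \<longrightarrow> u = \<beta>)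
                 \<and> (\<forall>u. 0 < u \<and> u < \<beta> \<longrightarrow> f u < 0) \<and> (\<forall>u>\<beta>. f u > 0)"
    and K_pos: "\<forall>r\<ge>R. K r > 0"
    and K_cont: "continuous_on {R..} K" and K'_cont: "continuous_on {R..} K'"
    and K_deriv: "\<forall>r\<ge>R. (K has_real_derivative K' r) (at r within {R..})"
    and H4: "\<forall>r\<ge>R. r * K' r / K r > - 2 * (real N - 1)"
      "K0 > 0" "K1 > 0" "real N + q * (real N - 2) < \<alpha>1" "\<alpha>1 \<le> \<alpha>" "\<alpha> < 2 * (real N - 1)"
      "\<forall>r\<ge>R. K0 * r powr (- \<alpha>) \<le> K r \<and> K r \<le> K1 * r powr (- \<alpha>1)"
    and sol: "\<forall>a>0. solves_Pa (hfun N K) f \<delta> (R powr (2 - real N)) a (v a)"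
  shows "filterlim (\<lambda>a. SUP t\<in>{0..R powr (2 - real N)}. \<bar>v a t\<bar>) at_top at_top"
proof -
  define T where "T = R powr (2 - real N)"
  define \<gamma> where "\<gamma> = (2 * (real N - 1) - \<alpha>1) / (real N - 2)"
  have f_cont: "continuous_on {0<..} f"
    using loc_lipschitz_on_imp_continuous_on[OF f_lip] by (rule continuous_on_subset) auto
  obtain g1 \<epsilon> where g1: "loc_lipschitz_on UNIV g1" and "0 < \<epsilon>"
    and near_0: "\<forall>u. 0 < \<bar>u\<bar> \<and> \<bar>u\<bar> < \<epsilon> \<longrightarrow> f u = - 1 / (\<bar>u\<bar> powr (q - 1) * u) + g1 u"
    using H2(3) by blast
  have "continuous_on {0..\<epsilon>} g1"
    using loc_lipschitz_on_imp_continuous_on[OF g1] by (rule continuous_on_subset) simp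
  moreover obtain \<beta> where \<beta>: "0 < \<beta>" "\<forall>u. 0 < u \<and> u < \<beta> \<longrightarrow> f u < 0" "\<forall>u>\<beta>. 0 < f u"
    using H3 by blast
  ultimately obtain B where B: "\<forall>u>0. - (u powr - q) - B \<le> f u" "0 \<le> B"
    using singular_lower_bound[OF f_cont _ \<open>0 < \<epsilon>\<close> near_0] by blast
  have h: "\<forall>s\<in>{0..T}. 0 \<le> hfun N K s \<and> hfun N K s \<le> K1 / (real N - 2)\<^sup>2 * s powr - \<gamma>"
    unfolding T_def \<gamma>_def using K_pos H4(7) by (intro ballI hfun_bounds[OF N R]) auto
  have "\<gamma> + q < 1"
    using N H4(4) by (simp add: \<gamma>_def field_simps)
  have sol_T: "\<forall>\<^sub>F a in at_top. solves_Pa (hfun N K) f \<delta> T a (v a)"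
    using eventually_gt_at_top[of 0] by eventually_elim (use sol in \<open>simp add: T_def\<close>)
  have "\<forall>\<^sub>F a in at_top. \<exists>t\<in>{0..T}. Z < v a t" for Z
  proof -
    obtain C where C: "\<forall>u. 0 < u \<and> u \<le> Z \<longrightarrow> f u \<le> C" "0 \<le> C"
      using upper_bound_on_Ioc[OF f_cont \<beta>(1,2)] by blast
    have "\<forall>\<^sub>F a in at_top. \<forall>w. solves_Pa (hfun N K) f \<delta> T a w \<longrightarrow> (\<exists>t\<in>{0..T}. Z < w t)"
      using R H4(3)
      by (intro solves_Pa_exceeds_level[OF _ \<delta>(1) h _ \<open>\<gamma> + q < 1\<close> H2(1) B C]) (auto simp: T_def)
    with sol_T show ?thesis
      by eventually_elim blast
  qed
  moreover have "\<forall>\<^sub>F a in at_top. continuous_on {0..T} (v a)"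
    using sol_T by eventually_elim (rule solves_Pa_continuous_on)
  ultimately show ?thesis
    unfolding T_def[symmetric] by (intro filterlim_SUP_abs_at_top)
qed

end
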